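(* Let $(A,f)$ be a finite-dimensional quadratic Lie algebra over a field $\mathbb{K}$ of characteristic zero, let $d$ be an $f$-skew-symmetric derivation of $A$, and let $(A_b,f_b)$ be the one-dimensional double extension of $(A,f)$ by $(b,d)$. Then $A_b$ is $2$-step nilpotent if and only if $0\neq \mathrm{im}\,d+A^2\subseteq Z(A)\cap\ker d$.
   Context: A quadratic Lie algebra $(A,f)$ is a Lie algebra with a non-degenerate symmetric bilinear form $f$ satisfying $f([x,y],z)+f(y,[x,z])=0$. A derivation $d$ is $f$-skew-symmetric if $f(d(x),y)+f(x,d(y))=0$. The one-dimensional double extension of $(A,f)$ by $(b,d)$ is $A_b=\mathbb{K}b\oplus A\oplus\mathbb{K}\beta$ with bracket $[\lambda b+a+\mu\beta,\lambda' b+a'+\mu'\beta]=\lambda d(a')-\lambda' d(a)+[a,a']_A+f(d(a),a')\beta$ and form $f_b(\lambda b+a+\mu\beta,\lambda' b+a'+\mu'\beta)=\lambda\mu'+\lambda'\mu+f(a,a')$. A Lie algebra $L$ is $2$-step nilpotent if $[L,[L,L]]=0$ and $[L,L]\neq 0$. *)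

theory Defs
  imports Complex_Main "HOL-Library.Product_Plus"
begin

definition fin_dim_vs :: "('k::field \<Rightarrow> 'a::ab_group_add \<Rightarrow> 'a) \<Rightarrow> bool" where
  "fin_dim_vs scale \<longleftrightarrow> (\<exists>B::'a set. finite_dimensional_vector_space scale B)"

definition bilinear_map :: "('k::field \<Rightarrow> 'a::ab_group_add \<Rightarrow> 'a) \<Rightarrow> ('k \<Rightarrow> 'c::ab_group_add \<Rightarrow> 'c)
    \<Rightarrow> ('a \<Rightarrow> 'a \<Rightarrow> 'c) \<Rightarrow> bool" where
  "bilinear_map scale scale2 g \<longleftrightarrow>
     (\<forall>x. Vector_Spaces.linear scale scale2 (g x)) \<and> (\<forall>y. Vector_Spaces.linear scale scale2 (\<lambda>x. g x y))"

definition lie_algebra :: "('k::field \<Rightarrow> 'a::ab_group_add \<Rightarrow> 'a) \<Rightarrow> ('a \<Rightarrow> 'a \<Rightarrow> 'a) \<Rightarrow> bool" where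
  "lie_algebra scale br \<longleftrightarrow> vector_space scale \<and> bilinear_map scale scale br \<and>
     (\<forall>x. br x x = 0) \<and>
     (\<forall>x y z. br x (br y z) + br y (br z x) + br z (br x y) = 0)"

definition quadratic_lie_algebra ::
  "('k::field \<Rightarrow> 'a::ab_group_add \<Rightarrow> 'a) \<Rightarrow> ('a \<Rightarrow> 'a \<Rightarrow> 'a) \<Rightarrow> ('a \<Rightarrow> 'a \<Rightarrow> 'k) \<Rightarrow> bool" where
  "quadratic_lie_algebra scale br f \<longleftrightarrow> lie_algebra scale br \<and>
     bilinear_map scale (*) f \<and> (\<forall>x y. f x y = f y x) \<and>
     (\<forall>x. (\<forall>y. f x y = 0) \<longrightarrow> x = 0) \<and>
     (\<forall>x y z. f (br x y) z + f y (br x z) = 0)"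

definition derivation :: "('k::field \<Rightarrow> 'a::ab_group_add \<Rightarrow> 'a) \<Rightarrow> ('a \<Rightarrow> 'a \<Rightarrow> 'a) \<Rightarrow> ('a \<Rightarrow> 'a) \<Rightarrow> bool" where
  "derivation scale br d \<longleftrightarrow> Vector_Spaces.linear scale scale d \<and>
     (\<forall>x y. d (br x y) = br (d x) y + br x (d y))"

definition skew_symmetric :: "('a \<Rightarrow> 'a \<Rightarrow> 'k::field) \<Rightarrow> ('a \<Rightarrow> 'a) \<Rightarrow> bool" where
  "skew_symmetric f d \<longleftrightarrow> (\<forall>x y. f (d x) y + f x (d y) = 0)"

text \<open>The one-dimensional double extension A_b = K b + A + K beta, elements written as
  triples (lambda, a, mu) meaning lambda b + a + mu beta.\<close>
definition dext_scale :: "('k::field \<Rightarrow> 'a::ab_group_add \<Rightarrow> 'a) \<Rightarrow> 'k \<Rightarrow> 'k \<times> 'a \<times> 'k \<Rightarrow> 'k \<times> 'a \<times> 'k" where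
  "dext_scale scale c = (\<lambda>(l, a, m). (c * l, scale c a, c * m))"

definition dext_bracket ::
  "('k::field \<Rightarrow> 'a::ab_group_add \<Rightarrow> 'a) \<Rightarrow> ('a \<Rightarrow> 'a \<Rightarrow> 'a) \<Rightarrow> ('a \<Rightarrow> 'a \<Rightarrow> 'k) \<Rightarrow> ('a \<Rightarrow> 'a)
     \<Rightarrow> 'k \<times> 'a \<times> 'k \<Rightarrow> 'k \<times> 'a \<times> 'k \<Rightarrow> 'k \<times> 'a \<times> 'k" where
  "dext_bracket scale br f d = (\<lambda>(l, a, m) (l', a', m').
     (0, scale l (d a') - scale l' (d a) + br a a', f (d a) a'))"

definition dext_form :: "('a \<Rightarrow> 'a \<Rightarrow> 'k::field) \<Rightarrow> 'k \<times> 'a \<times> 'k \<Rightarrow> 'k \<times> 'a \<times> 'k \<Rightarrow> 'k" where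
  "dext_form f = (\<lambda>(l, a, m) (l', a', m'). l * m' + l' * m + f a a')"

definition two_step_nilpotent :: "('b \<Rightarrow> 'b \<Rightarrow> 'b::zero) \<Rightarrow> bool" where
  "two_step_nilpotent br \<longleftrightarrow> (\<forall>x y z. br x (br y z) = 0) \<and> (\<exists>x y. br x y \<noteq> 0)"

definition derived_algebra :: "('k::field \<Rightarrow> 'a::ab_group_add \<Rightarrow> 'a) \<Rightarrow> ('a \<Rightarrow> 'a \<Rightarrow> 'a) \<Rightarrow> 'a set" where
  "derived_algebra scale br = module.span scale {br x y | x y. True}"

definition lie_center :: "('a \<Rightarrow> 'a \<Rightarrow> 'a::zero) \<Rightarrow> 'a set" where
  "lie_center br = {z. \<forall>x. br z x = 0}"

definition subspace_sum :: "'a::plus set \<Rightarrow> 'a set \<Rightarrow> 'a set" where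
  "subspace_sum U V = {u + v | u v. u \<in> U \<and> v \<in> V}"

end

theory Submission
  imports Defs
begin

text \<open>Every bracket of \<open>A\<^sub>b\<close> has zero \<open>b\<close>-component, and
  \<open>[(\<lambda>, a, \<mu>), (0, w, \<nu>)] = (0, \<lambda> d w + [a, w], f (d a) w)\<close> with
  \<open>f (d a) w = - f a (d w)\<close>; so \<open>(0, w, \<nu>)\<close> is annihilated by all of \<open>A\<^sub>b\<close> iff
  \<open>w \<in> Z(A) \<inter> ker d\<close>. The \<open>A\<close>-components of brackets lie in \<open>im d + A\<^sup>2\<close> and include
  \<open>im d\<close> and all \<open>[a, a']\<close>, whence \<open>[A\<^sub>b, [A\<^sub>b, A\<^sub>b]] = 0\<close> iff
  \<open>im d + A\<^sup>2 \<subseteq> Z(A) \<inter> ker d\<close>; and \<open>[A\<^sub>b, A\<^sub>b] = 0\<close> iff \<open>d = 0\<close> and \<open>A\<close> is abelian,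
  i.e. iff \<open>im d + A\<^sup>2 = 0\<close>.\<close>

lemma bilinear_map_zero:
  assumes "bilinear_map s1 s2 g"
  shows "g 0 y = 0" and "g x 0 = 0"
proof -
  interpret left: Vector_Spaces.linear s1 s2 "\<lambda>x. g x y"
    using assms by (simp add: bilinear_map_def)
  interpret right: Vector_Spaces.linear s1 s2 "g x"
    using assms by (simp add: bilinear_map_def)
  show "g 0 y = 0" and "g x 0 = 0"
    using left.zero right.zero by simp_all
qed

lemma lie_algebra_bracket_bilinear:
  assumes "lie_algebra scale br"
  shows "br x (y + z) = br x y + br x z" and "br (x + y) z = br x z + br y z"
    and "br x (scale c y) = scale c (br x y)" and "br (scale c x) y = scale c (br x y)"
proof -
  have "Vector_Spaces.linear scale scale (br x)" "Vector_Spaces.linear scale scale (\<lambda>x. br x y)"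
    for x y
    using assms by (simp_all add: lie_algebra_def bilinear_map_def)
  then show "br x (y + z) = br x y + br x z" and "br (x + y) z = br x z + br y z"
    and "br x (scale c y) = scale c (br x y)" and "br (scale c x) y = scale c (br x y)"
    by (simp_all add: Vector_Spaces.linear_iff)
qed

lemma lie_algebra_bracket_zero:
  assumes "lie_algebra scale br"
  shows "br x 0 = 0" and "br 0 x = 0"
  using assms unfolding lie_algebra_def by (meson bilinear_map_zero)+

lemma lie_algebra_bracket_antisym:
  assumes "lie_algebra scale br"
  shows "br y x = - br x y"
proof -
  have alt: "\<And>z. br z z = 0"
    using assms by (simp add: lie_algebra_def)
  have "0 = br (x + y) (x + y)" by (simp add: alt)
  also have "\<dots> = br x y + br y x"
    unfolding lie_algebra_bracket_bilinear[OF assms] by (simp add: alt)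
  finally show ?thesis by (metis add.commute eq_neg_iff_add_eq_0)
qed

lemma lie_center_iff_bracket_left:
  assumes "lie_algebra scale br"
  shows "z \<in> lie_center br \<longleftrightarrow> (\<forall>x. br x z = 0)"
  using lie_algebra_bracket_antisym[OF assms, of z] by (auto simp: lie_center_def)

lemma subspace_lie_center:
  assumes "lie_algebra scale br"
  shows "module.subspace scale (lie_center br)"
proof -
  interpret vector_space scale
    using assms by (simp add: lie_algebra_def)
  show ?thesis
    by (rule subspaceI) (simp_all add: lie_center_def lie_algebra_bracket_bilinear[OF assms]
      lie_algebra_bracket_zero[OF assms])
qed

lemma subspace_sum_span_subset_iff:
  assumes "vector_space scale" and "module.subspace scale V" and "U \<noteq> {}"
  shows "subspace_sum U (module.span scale B) \<subseteq> V \<longleftrightarrow> U \<subseteq> V \<and> B \<subseteq> V"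
proof
  interpret vector_space scale by (fact assms(1))
  assume "subspace_sum U (span B) \<subseteq> V"
  then have sum_mem: "u + b \<in> V" if "u \<in> U" and "b \<in> span B" for u b
    using that by (auto simp: subspace_sum_def)
  then have U: "U \<subseteq> V"
    using span_zero by fastforce
  moreover have "B \<subseteq> V"
  proof
    fix b assume "b \<in> B"
    obtain u where "u \<in> U" using assms(3) by blast
    then have "(u + b) - u \<in> V"
      using sum_mem[OF _ span_base[OF \<open>b \<in> B\<close>]] U subspace_diff[OF assms(2)] by blast
    then show "b \<in> V" by simp
  qed
  ultimately show "U \<subseteq> V \<and> B \<subseteq> V" ..
next
  interpret vector_space scale by (fact assms(1))
  assume "U \<subseteq> V \<and> B \<subseteq> V"
  then show "subspace_sum U (span B) \<subseteq> V"
    using span_minimal[OF _ assms(2), of B] subspace_add[OF assms(2)]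
    by (auto simp: subspace_sum_def)
qed

lemma subspace_sum_range_derived_algebra_eq_0_iff:
  assumes "vector_space scale"
  shows "subspace_sum (range d) (derived_algebra scale br) = {0} \<longleftrightarrow>
    (\<forall>x. d x = 0) \<and> (\<forall>x y. br x y = 0)"
proof -
  interpret vector_space scale by (fact assms)
  have "d x + 0 \<in> subspace_sum (range d) (derived_algebra scale br)"
    unfolding subspace_sum_def derived_algebra_def using span_zero by blast
  then have "subspace_sum (range d) (derived_algebra scale br) = {0} \<longleftrightarrow>
      subspace_sum (range d) (derived_algebra scale br) \<subseteq> {0}"
    by (auto simp: subset_singleton_iff)
  also have "\<dots> \<longleftrightarrow> range d \<subseteq> {0} \<and> {br x y | x y. True} \<subseteq> {0}"
    unfolding derived_algebra_def
    by (rule subspace_sum_span_subset_iff[OF assms subspace_single_0]) simp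
  finally show ?thesis by blast
qed

lemma dext_bracket_apply [simp]:
  "dext_bracket scale br f d (l, a, m) (l', a', m') =
    (0, scale l (d a') - scale l' (d a) + br a a', f (d a) a')"
  by (simp add: dext_bracket_def)

lemma dext_bracket_A_component_in_subspace_sum:
  assumes "Vector_Spaces.linear scale scale d"
  shows "scale l (d a') - scale l' (d a) + br a a' \<in>
    subspace_sum (range d) (derived_algebra scale br)"
proof -
  interpret d: Vector_Spaces.linear scale scale d by (fact assms)
  have "scale l (d a') - scale l' (d a) = d (scale l a' - scale l' a)"
    by (simp add: d.diff d.scale)
  moreover have "br a a' \<in> derived_algebra scale br"
    unfolding derived_algebra_def by (rule d.vs1.span_base) blast
  ultimately show ?thesis
    unfolding subspace_sum_def by auto
qed

lemma dext_bracket_eq_0_iff: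
  assumes "lie_algebra scale br" and "Vector_Spaces.linear scale scale d"
    and "bilinear_map scale (*) f"
  shows "(\<forall>X Y. dext_bracket scale br f d X Y = 0) \<longleftrightarrow>
    (\<forall>x. d x = 0) \<and> (\<forall>x y. br x y = 0)"
proof
  interpret d: Vector_Spaces.linear scale scale d by (fact assms(2))
  assume "\<forall>X Y. dext_bracket scale br f d X Y = 0"
  from this[rule_format, of "(1, 0, 0)" "(0, x, 0)" for x]
    this[rule_format, of "(0, x, 0)" "(0, y, 0)" for x y]
  show "(\<forall>x. d x = 0) \<and> (\<forall>x y. br x y = 0)"
    by (simp add: zero_prod_def lie_algebra_bracket_zero[OF assms(1)])
next
  interpret d: Vector_Spaces.linear scale scale d by (fact assms(2))
  assume "(\<forall>x. d x = 0) \<and> (\<forall>x y. br x y = 0)"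
  then show "\<forall>X Y. dext_bracket scale br f d X Y = 0"
    by (auto simp: zero_prod_def bilinear_map_zero[OF assms(3)])
qed

lemma dext_bracket_all_left_eq_0_iff:
  assumes "lie_algebra scale br" and "Vector_Spaces.linear scale scale d"
    and "bilinear_map scale (*) f" and "skew_symmetric f d"
  shows "(\<forall>X. dext_bracket scale br f d X (0, w, c) = 0) \<longleftrightarrow>
    w \<in> lie_center br \<and> d w = 0"
proof
  interpret d: Vector_Spaces.linear scale scale d by (fact assms(2))
  assume "\<forall>X. dext_bracket scale br f d X (0, w, c) = 0"
  from this[rule_format, of "(1, 0, 0)"] this[rule_format, of "(0, x, 0)" for x]
  show "w \<in> lie_center br \<and> d w = 0"
    by (simp add: zero_prod_def lie_algebra_bracket_zero[OF assms(1)]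
        lie_center_iff_bracket_left[OF assms(1)])
next
  interpret d: Vector_Spaces.linear scale scale d by (fact assms(2))
  assume w: "w \<in> lie_center br \<and> d w = 0"
  have "f (d a) w = - f a (d w)" for a
    using assms(4) by (simp add: skew_symmetric_def eq_neg_iff_add_eq_0)
  with w show "\<forall>X. dext_bracket scale br f d X (0, w, c) = 0"
    by (auto simp: zero_prod_def lie_center_iff_bracket_left[OF assms(1)]
        bilinear_map_zero[OF assms(3)])
qed

lemma dext_nested_bracket_eq_0_iff:
  assumes "lie_algebra scale br" and "Vector_Spaces.linear scale scale d"
    and "bilinear_map scale (*) f" and "skew_symmetric f d"
  shows "(\<forall>X Y Z. dext_bracket scale br f d X (dext_bracket scale br f d Y Z) = 0) \<longleftrightarrow>
    subspace_sum (range d) (derived_algebra scale br) \<subseteq> lie_center br \<inter> {x. d x = 0}"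
    (is "_ \<longleftrightarrow> ?S \<subseteq> ?K")
proof -
  interpret d: Vector_Spaces.linear scale scale d by (fact assms(2))
  let ?w = "\<lambda>l a l' a'. scale l (d a') - scale l' (d a) + br a a'"
  have inner: "(\<forall>X. dext_bracket scale br f d X
        (dext_bracket scale br f d (l, a, m) (l', a', m')) = 0) \<longleftrightarrow> ?w l a l' a' \<in> ?K"
    for l a m l' a' m'
    by (simp only: dext_bracket_apply dext_bracket_all_left_eq_0_iff[OF assms]
        Int_iff mem_Collect_eq)
  have "(\<forall>X Y Z. dext_bracket scale br f d X (dext_bracket scale br f d Y Z) = 0) \<longleftrightarrow>
      (\<forall>l a l' a'. ?w l a l' a' \<in> ?K)"
    using inner by (metis prod_cases3)
  also have "\<dots> \<longleftrightarrow> ?S \<subseteq> ?K"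
  proof
    assume w: "\<forall>l a l' a'. ?w l a l' a' \<in> ?K"
    have "d x \<in> ?K" for x
      using w[rule_format, where l = 1 and a = 0 and l' = 0 and a' = x]
      by (simp add: lie_algebra_bracket_zero[OF assms(1)])
    then have "range d \<subseteq> ?K"
      by blast
    moreover have "{br a a' | a a'. True} \<subseteq> ?K"
      using w[rule_format, where l = 0 and l' = 0] by auto
    moreover have "d.vs1.subspace ?K"
      by (rule d.vs1.subspace_inter[OF subspace_lie_center[OF assms(1)] d.subspace_kernel])
    ultimately show "?S \<subseteq> ?K"
      unfolding derived_algebra_def
      by (subst subspace_sum_span_subset_iff[OF d.vs1.vector_space_axioms]) auto
  next
    assume "?S \<subseteq> ?K"
    then show "\<forall>l a l' a'. ?w l a l' a' \<in> ?K"
      using dext_bracket_A_component_in_subspace_sum[OF assms(2)] by blast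
  qed
  finally show ?thesis .
qed

theorem proposition2p10:
  fixes scale :: "'k::field_char_0 \<Rightarrow> 'a::ab_group_add \<Rightarrow> 'a"
    and br :: "'a \<Rightarrow> 'a \<Rightarrow> 'a"
    and f :: "'a \<Rightarrow> 'a \<Rightarrow> 'k"
    and d :: "'a \<Rightarrow> 'a"
  assumes "fin_dim_vs scale"
    and "quadratic_lie_algebra scale br f"
    and "derivation scale br d"
    and "skew_symmetric f d"
  shows "two_step_nilpotent (dext_bracket scale br f d) \<longleftrightarrow>
    (subspace_sum (range d) (derived_algebra scale br) \<noteq> {0} \<and>
     subspace_sum (range d) (derived_algebra scale br) \<subseteq> lie_center br \<inter> {x. d x = 0})"
proof -
  have lie: "lie_algebra scale br" and f_bilinear: "bilinear_map scale (*) f"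
    using assms(2) by (simp_all add: quadratic_lie_algebra_def)
  have d_linear: "Vector_Spaces.linear scale scale d"
    using assms(3) by (simp add: derivation_def)
  have vs: "vector_space scale"
    using lie by (simp add: lie_algebra_def)
  show ?thesis
    unfolding two_step_nilpotent_def
      dext_nested_bracket_eq_0_iff[OF lie d_linear f_bilinear assms(4)]
      subspace_sum_range_derived_algebra_eq_0_iff[OF vs]
      dext_bracket_eq_0_iff[OF lie d_linear f_bilinear, symmetric]
    by blast
qed

end
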